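(* Every $3$-CET with exactly one flip has a periodic point. Consequently there is no transitive $3$-CET with exactly one flip.
   Context: Let $S^1=[0,1]/(0\sim 1)$ with the orientation induced by $[0,1]$. Let $I_1,\dots,I_n$ be pairwise disjoint open subintervals of $S^1$ whose closures cover $S^1$. An $n$-CET is an injective map $T:\bigcup_{i=1}^n I_i\to S^1$ which is an isometry on each $I_i$ and which cannot be continuously extended to a larger open subset of $S^1$ (so it has exactly $n$ discontinuity points). A flip is a subinterval $I_i$ on which $T$ reverses orientation. A periodic point is $p$ with $T^m(p)=p$ for some $m\ge1$ (with $p\in\mathrm{Dom}(T^m)$). The orbit of $p$ is $\{T^m(p): m\in\mathbb{Z},\ p\in\mathrm{Dom}(T^m)\}$ and $T$ is transitive if some orbit is dense in $S^1$. *)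

theory Defs
  imports "HOL-Analysis.Analysis"
begin

text \<open>The circle S^1 = [0,1]/(0~1) is represented by the real interval {0..<1};
  a point x is identified with its representative, and frac reduces mod 1.\<close>

definition circ :: "real set" where
  "circ = {0..<1}"

definition arc :: "real \<Rightarrow> real \<Rightarrow> real set" where
  "arc a L = {x \<in> circ. 0 < frac (x - a) \<and> frac (x - a) < L}"

text \<open>Cut points c 0 < ... < c (n-1) in [0,1); the i-th interval is the arc
  from c i to c (i+1) (cyclically).\<close>
definition cut_len :: "nat \<Rightarrow> (nat \<Rightarrow> real) \<Rightarrow> nat \<Rightarrow> real" where
  "cut_len n c i = (if Suc i < n then c (Suc i) - c i else 1 + c 0 - c i)"

definition cut_int :: "nat \<Rightarrow> (nat \<Rightarrow> real) \<Rightarrow> nat \<Rightarrow> real set" where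
  "cut_int n c i = arc (c i) (cut_len n c i)"

definition piece :: "(nat \<Rightarrow> real) \<Rightarrow> (nat \<Rightarrow> bool) \<Rightarrow> nat \<Rightarrow> real \<Rightarrow> real" where
  "piece t fl i x = (if fl i then frac (t i - x) else frac (t i + x))"

text \<open>Maximality (no continuous
  extension to a larger open set) means that at every cut point the limits
  from the left interval and from the right interval differ.\<close>
definition cet_data :: "nat \<Rightarrow> (nat \<Rightarrow> real) \<Rightarrow> (nat \<Rightarrow> real) \<Rightarrow> (nat \<Rightarrow> bool)
     \<Rightarrow> real set \<Rightarrow> (real \<Rightarrow> real) \<Rightarrow> bool" where
  "cet_data n c t fl D T \<longleftrightarrow>
     n \<ge> 1 \<and> 0 \<le> c 0 \<and> c (n - 1) < 1 \<and> (\<forall>i. Suc i < n \<longrightarrow> c i < c (Suc i)) \<and>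
     D = (\<Union>i<n. cut_int n c i) \<and>
     (\<forall>i<n. \<forall>x\<in>cut_int n c i. T x = piece t fl i x) \<and>
     inj_on T D \<and>
     (\<forall>i<n. piece t fl ((i + n - 1) mod n) (c i) \<noteq> piece t fl i (c i))"

definition cet_flips :: "nat \<Rightarrow> nat \<Rightarrow> real set \<Rightarrow> (real \<Rightarrow> real) \<Rightarrow> bool" where
  "cet_flips n k D T \<longleftrightarrow>
     (\<exists>c t fl. cet_data n c t fl D T \<and> card {i. i < n \<and> fl i} = k)"

fun dom_iter :: "real set \<Rightarrow> (real \<Rightarrow> real) \<Rightarrow> nat \<Rightarrow> real set" where
  "dom_iter D T 0 = circ"
| "dom_iter D T (Suc m) = {x \<in> D. T x \<in> dom_iter D T m}"

definition periodic_point :: "real set \<Rightarrow> (real \<Rightarrow> real) \<Rightarrow> real \<Rightarrow> bool" where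
  "periodic_point D T p \<longleftrightarrow> (\<exists>m\<ge>1. p \<in> dom_iter D T m \<and> (T ^^ m) p = p)"

text \<open>Orbit: forward iterates T^m p and backward iterates T^{-m} p
  (points q with T^m q = p), T being injective.\<close>
definition orbit :: "real set \<Rightarrow> (real \<Rightarrow> real) \<Rightarrow> real \<Rightarrow> real set" where
  "orbit D T p = {(T ^^ m) p | m. p \<in> dom_iter D T m}
              \<union> {q. \<exists>m. q \<in> dom_iter D T m \<and> (T ^^ m) q = p}"

text \<open>Dense in S^1: every open arc meets it; equivalently, with the
  representation {0..<1}, its closure in the reals contains {0..<1}.\<close>
definition transitive :: "real set \<Rightarrow> (real \<Rightarrow> real) \<Rightarrow> bool" where
  "transitive D T \<longleftrightarrow> (\<exists>p\<in>circ. circ \<subseteq> closure (orbit D T p))"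

end

(* The flip \<sigma> x = t_f - x conjugates T to its inverse on the domain: the images of the three
   intervals tile the circle, and the discontinuity between the two translated intervals forces
   T to reverse their cyclic order, which is exactly the identity T (\<sigma> (T y)) = \<sigma> y.
   By Poincare recurrence some x in the flipped interval returns to it after k steps; reflecting
   the orbit segment from x to T^k x by \<sigma> closes it into a cycle through T x.
   Near a periodic point the return map is a translation or a reflection, so periodic points
   form an open set; a dense orbit would meet it and hence be finite, which is absurd. *)

theory Submission
  imports Defs
begin

text \<open>Otherwise the simplifier rewrites the arc condition \<open>0 < frac (x - a)\<close> to \<open>x - a \<notin> \<int>\<close>.\<close>
declare frac_gt_0_iff [simp del]

section \<open>Arcs of the circle\<close>

lemma frac_eq_iff_diff_Ints: "frac x = frac y \<longleftrightarrow> x - y \<in> \<int>"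
  for x y :: real
proof
  assume "frac x = frac y"
  then obtain n where "x = y + of_int n" by (elim frac_eqE)
  then show "x - y \<in> \<int>" by simp
next
  assume "x - y \<in> \<int>"
  then show "frac x = frac y" using frac_add_int_right[of "x - y" y] by simp
qed

lemma frac_minus_self_Ints: "frac x - x \<in> \<int>"
  for x :: real
  by (simp add: frac_def)

lemma frac_diff_frac_left [simp]: "frac (frac x - y) = frac (x - y)"
  for x y :: real
  using frac_add_simps(1)[of x "- y"] by simp

lemma frac_in_circ [simp]: "frac x \<in> circ"
  by (simp add: circ_def frac_lt_1)

lemma frac_eq_self_if_circ [simp]: "x \<in> circ \<Longrightarrow> frac x = x"
  by (simp add: circ_def)

lemma bounded_if_subset_circ: "A \<subseteq> circ \<Longrightarrow> bounded A"
  unfolding circ_def using bounded_subset[of "{0..<1::real}"] by simp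

lemma arc_subset_circ: "arc a L \<subseteq> circ"
  by (auto simp: arc_def)

lemma arc_borel: "arc a L \<in> sets borel"
  unfolding arc_def circ_def frac_def by measurable

lemma arc_cong: "a - b \<in> \<int> \<Longrightarrow> arc a L = arc b L"
proof -
  assume "a - b \<in> \<int>"
  then have "frac (x - a) = frac (x - b)" for x
    by (simp add: frac_eq_iff_diff_Ints) (metis Ints_minus minus_diff_eq)
  then show ?thesis by (simp add: arc_def)
qed

lemma arc_eq_interval:
  assumes "0 \<le> a" "0 < L" "a + L \<le> 1"
  shows "arc a L = {a<..<a+L}"
proof (intro set_eqI iffI)
  fix x assume x: "x \<in> arc a L"
  then have x01: "0 \<le> x" "x < 1" and f: "0 < frac (x - a)" "frac (x - a) < L"
    by (auto simp: arc_def circ_def)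
  show "x \<in> {a<..<a+L}"
  proof (cases "a \<le> x")
    case True
    then have "frac (x - a) = x - a" using x01 assms by (simp add: frac_eq)
    then show ?thesis using f by auto
  next
    case False
    then have "frac (x - a) = x - a + 1" using x01 assms frac_1_eq[of "x - a"] by (simp add: frac_eq)
    then show ?thesis using f x01 assms by auto
  qed
next
  fix x assume x: "x \<in> {a<..<a+L}"
  then have "frac (x - a) = x - a" using assms by (simp add: frac_eq)
  then show "x \<in> arc a L" using x assms by (auto simp: arc_def circ_def)
qed

lemma arc_eq_wrapped_interval:
  assumes "0 \<le> b" "b < a" "a < 1"
  shows "arc a (1 + b - a) = {a<..<1} \<union> {0..<b}"
proof (rule set_eqI)
  fix x
  show "x \<in> arc a (1 + b - a) \<longleftrightarrow> x \<in> {a<..<1} \<union> {0..<b}"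
  proof (cases "0 \<le> x \<and> x < 1")
    case False
    then show ?thesis using assms by (auto simp: arc_def circ_def)
  next
    case x01: True
    show ?thesis
    proof (cases "a \<le> x")
      case True
      then have "frac (x - a) = x - a" using x01 assms by (simp add: frac_eq)
      then show ?thesis using x01 assms True by (auto simp: arc_def circ_def)
    next
      case False
      then have "frac (x - a) = x - a + 1" using x01 assms frac_1_eq[of "x - a"] by (simp add: frac_eq)
      then show ?thesis using x01 assms False by (auto simp: arc_def circ_def)
    qed
  qed
qed

lemma interval_subset_arc:
  assumes "a \<in> circ" "0 < \<delta>" "\<delta> \<le> L" "a + \<delta> \<le> 1"
  shows "{a<..<a+\<delta>} \<subseteq> arc a L"
proof
  fix x assume x: "x \<in> {a<..<a+\<delta>}"
  then have "frac (x - a) = x - a" using assms by (auto simp: frac_eq circ_def)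
  then show "x \<in> arc a L" using x assms by (auto simp: arc_def circ_def)
qed

lemma arc_neighbourhood:
  assumes p: "p \<in> arc a L" and "L \<le> 1"
  obtains e where "0 < e" "\<And>d. \<bar>d\<bar> < e \<Longrightarrow> frac (p + d) \<in> arc a L"
proof
  define r where "r = frac (p - a)"
  have r: "0 < r" "r < L" using p by (auto simp: arc_def r_def)
  show "0 < min r (L - r)" using r by simp
  fix d assume d: "\<bar>d\<bar> < min r (L - r)"
  have "frac (frac (p + d) - a) = frac (r + d)"
    by (simp add: r_def frac_eq_iff_diff_Ints algebra_simps)
  also have "\<dots> = r + d" using d r \<open>L \<le> 1\<close> by (auto simp: frac_eq)
  moreover have "0 < r + d" "r + d < L" using d by auto
  ultimately show "frac (p + d) \<in> arc a L" by (simp add: arc_def)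
qed

lemma translation_image_arc: "(\<lambda>x. frac (t + x)) ` arc c L = arc (t + c) L"
proof (intro set_eqI iffI)
  fix y assume "y \<in> (\<lambda>x. frac (t + x)) ` arc c L"
  then obtain x where "x \<in> arc c L" "y = frac (t + x)" by blast
  moreover have "frac (frac (t + x) - (t + c)) = frac (x - c)" by (simp add: algebra_simps)
  ultimately show "y \<in> arc (t + c) L" by (simp add: arc_def)
next
  fix y assume y: "y \<in> arc (t + c) L"
  have "frac (frac (y - t) - c) = frac (y - (t + c))" by (simp add: algebra_simps)
  then have "frac (y - t) \<in> arc c L" using y by (simp add: arc_def)
  moreover have "frac (t + frac (y - t)) = y" using y arc_subset_circ by fastforce
  ultimately show "y \<in> (\<lambda>x. frac (t + x)) ` arc c L" by (metis image_eqI)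
qed

lemma frac_length_minus_offset:
  assumes "x \<in> arc c L" "L \<le> 1"
  shows "frac (L - (x - c)) = L - frac (x - c)"
proof -
  have "frac (L - (x - c)) = frac (L - frac (x - c))" by (simp add: frac_diff_simp)
  also have "\<dots> = L - frac (x - c)" using assms by (auto simp: arc_def frac_eq)
  finally show ?thesis .
qed

lemma reflection_image_arc:
  assumes "L \<le> 1"
  shows "(\<lambda>x. frac (t - x)) ` arc c L = arc (t - c - L) L"
proof (intro set_eqI iffI)
  fix y assume "y \<in> (\<lambda>x. frac (t - x)) ` arc c L"
  then obtain x where x: "x \<in> arc c L" "y = frac (t - x)" by blast
  have "frac (frac (t - x) - (t - c - L)) = frac (L - (x - c))"
    by (simp only: frac_diff_frac_left) (simp add: algebra_simps)
  then show "y \<in> arc (t - c - L) L"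
    using x frac_length_minus_offset[OF x(1) assms] by (auto simp: arc_def)
next
  fix y assume y: "y \<in> arc (t - c - L) L"
  have "frac (frac (t - y) - c) = frac (L - (y - (t - c - L)))"
    by (simp only: frac_diff_frac_left) (simp add: algebra_simps)
  then have "frac (t - y) \<in> arc c L"
    using y frac_length_minus_offset[OF y assms] by (auto simp: arc_def)
  moreover have "frac (t - frac (t - y)) = y" using y arc_subset_circ by (fastforce simp: frac_diff_simp)
  ultimately show "y \<in> (\<lambda>x. frac (t - x)) ` arc c L" by (metis image_eqI)
qed

lemma disjoint_arcs_gap:
  assumes disj: "arc P L \<inter> arc Q M = {}" and "L \<le> 1" "0 < M"
  shows "L \<le> frac (Q - P)"
proof (rule ccontr)
  assume "\<not> L \<le> frac (Q - P)"
  define r where "r = frac (Q - P)"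
  have r: "0 \<le> r" "r < L" using \<open>\<not> L \<le> frac (Q - P)\<close> by (auto simp: r_def)
  define e where "e = min M (L - r) / 2"
  have e: "0 < e" "e < M" "r + e < L" using r \<open>0 < M\<close> by (auto simp: e_def min_def field_simps)
  define z where "z = frac (Q + e)"
  have "frac (z - Q) = e"
    using e \<open>L \<le> 1\<close> r by (simp add: z_def frac_eq algebra_simps)
  moreover have "frac (z - P) = r + e"
  proof -
    have "frac (z - P) = frac (r + e)"
      by (simp add: z_def r_def frac_eq_iff_diff_Ints)
    then show ?thesis using e r \<open>L \<le> 1\<close> by (simp add: frac_eq)
  qed
  ultimately have "z \<in> arc P L \<inter> arc Q M" using e r by (simp add: arc_def z_def)
  then show False using disj by blast
qed

lemma three_disjoint_arcs_abut:
  assumes disj: "arc P1 L1 \<inter> arc P2 L2 = {}" "arc P1 L1 \<inter> arc P3 L3 = {}" "arc P2 L2 \<inter> arc P3 L3 = {}"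
    and pos: "0 < L1" "0 < L2" "0 < L3" and sum: "L1 + L2 + L3 = 1"
  shows "(frac (P2 - P1) = L1 \<and> frac (P3 - P2) = L2 \<and> frac (P1 - P3) = L3) \<or>
         (frac (P1 - P2) = L2 \<and> frac (P2 - P3) = L3 \<and> frac (P3 - P1) = L1)"
proof -
  have le1: "L1 \<le> 1" "L2 \<le> 1" "L3 \<le> 1" using pos sum by linarith+
  have disj': "arc P2 L2 \<inter> arc P1 L1 = {}" "arc P3 L3 \<inter> arc P1 L1 = {}" "arc P3 L3 \<inter> arc P2 L2 = {}"
    using disj by (simp_all add: Int_commute)
  have opposite: "frac (P - Q) = 1 - frac (Q - P)" if "0 < frac (Q - P)" for P Q :: real
    using frac_non_zero[of "Q - P"] that by (simp add: frac_gt_0_iff)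
  define A B C where "A = frac (P2 - P1)" and "B = frac (P3 - P2)" and "C = frac (P1 - P3)"
  have lower: "L1 \<le> A" "L2 \<le> B" "L3 \<le> C"
    unfolding A_def B_def C_def
    by (rule disjoint_arcs_gap; use disj disj' le1 pos in simp)+
  have "L2 \<le> frac (P1 - P2)" "L3 \<le> frac (P2 - P3)" "L1 \<le> frac (P3 - P1)"
    by (rule disjoint_arcs_gap; use disj disj' le1 pos in simp)+
  then have upper: "L2 \<le> 1 - A" "L3 \<le> 1 - B" "L1 \<le> 1 - C"
    using lower pos opposite[of P2 P1] opposite[of P3 P2] opposite[of P1 P3]
    unfolding A_def B_def C_def by auto
  have "A + B + C \<in> \<int>"
  proof -
    have "A + B + C = (A - (P2 - P1)) + (B - (P3 - P2)) + (C - (P1 - P3))" by simp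
    then show ?thesis unfolding A_def B_def C_def by (metis frac_minus_self_Ints Ints_add)
  qed
  then obtain n where n: "A + B + C = of_int n" by (elim Ints_cases)
  have "0 < n" "n < 3" using n lower upper pos by linarith+
  then consider "A + B + C = 1" | "A + B + C = 2" using n by force
  then show ?thesis
  proof cases
    case 1
    then have "A = L1" "B = L2" "C = L3" using lower sum by linarith+
    then show ?thesis unfolding A_def B_def C_def by blast
  next
    case 2
    then have "1 - A = L2" "1 - B = L3" "1 - C = L1" using upper sum by linarith+
    then show ?thesis using opposite[of P2 P1] opposite[of P3 P2] opposite[of P1 P3] lower pos
      unfolding A_def B_def C_def by auto
  qed
qed

lemma reflection_reverses_translation:
  assumes T: "\<And>x. x \<in> arc c L \<Longrightarrow> T x = frac (t + x)"
    and symmetric: "s - t - c - L - c \<in> \<int>" and "L \<le> 1" and y: "y \<in> arc c L"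
  shows "frac (s - T y) \<in> arc c L \<and> T (frac (s - T y)) = frac (s - y)"
proof -
  have "frac (s - T y) = frac ((s - t) - y)" using T[OF y] by (simp add: frac_diff_simp algebra_simps)
  moreover have "frac ((s - t) - y) \<in> arc c L"
    using reflection_image_arc[OF \<open>L \<le> 1\<close>, of "s - t" c] arc_cong[OF symmetric] y by blast
  moreover have "frac (t + frac ((s - t) - y)) = frac (s - y)" by simp
  ultimately show ?thesis using T by simp
qed

section \<open>Measure-preserving maps of the circle\<close>

definition measure_preserving_on :: "(real \<Rightarrow> real) \<Rightarrow> real set \<Rightarrow> bool" where
  "measure_preserving_on T S \<longleftrightarrow>
     (\<forall>A. A \<in> sets borel \<longrightarrow> A \<subseteq> S \<longrightarrow>
        T ` A \<in> sets borel \<and> measure lebesgue (T ` A) = measure lebesgue A)"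

lemma measure_preserving_onD:
  "measure_preserving_on T S \<Longrightarrow> A \<in> sets borel \<Longrightarrow> A \<subseteq> S \<Longrightarrow>
     T ` A \<in> sets borel \<and> measure lebesgue (T ` A) = measure lebesgue A"
  unfolding measure_preserving_on_def by blast

lemma measure_preserving_on_cong:
  assumes "\<And>x. x \<in> S \<Longrightarrow> T x = f x" "measure_preserving_on f S"
  shows "measure_preserving_on T S"
  unfolding measure_preserving_on_def
proof (intro allI impI)
  fix A assume A: "A \<in> sets borel" "A \<subseteq> S"
  then have "T ` A = f ` A" using assms(1) by (intro image_cong) auto
  then show "T ` A \<in> sets borel \<and> measure lebesgue (T ` A) = measure lebesgue A"
    using measure_preserving_onD[OF assms(2) A] by simp
qed

lemma measure_preserving_on_subset:
  "measure_preserving_on T S \<Longrightarrow> S' \<subseteq> S \<Longrightarrow> measure_preserving_on T S'"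
  unfolding measure_preserving_on_def by (meson subset_trans)

lemma measure_disjoint_Un_bounded:
  assumes "A \<in> sets borel" "B \<in> sets borel" "bounded (A \<union> B)" "A \<inter> B = {}"
  shows "measure lebesgue (A \<union> B) = measure lebesgue A + measure lebesgue B"
proof -
  have "A \<in> lmeasurable" "B \<in> lmeasurable"
    using assms by (simp_all add: bounded_set_imp_lmeasurable)
  then show ?thesis using measure_Un3[of A lebesgue B] assms(4) by simp
qed

lemma borel_translation: "S \<in> sets borel \<Longrightarrow> (+) c ` S \<in> sets borel"
  for S :: "real set"
proof -
  assume S: "S \<in> sets borel"
  have "(\<lambda>x::real. x - c) \<in> borel_measurable borel" by measurable
  moreover have "(+) c ` S = (\<lambda>x. x - c) -` S" by force
  ultimately show ?thesis using measurable_sets[of "\<lambda>x. x - c" borel borel S] S by simp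
qed

lemma borel_reflection: "S \<in> sets borel \<Longrightarrow> (\<lambda>x. c - x) ` S \<in> sets borel"
  for S :: "real set"
proof -
  assume S: "S \<in> sets borel"
  have "(\<lambda>x::real. c - x) \<in> borel_measurable borel" by measurable
  moreover have "(\<lambda>x. c - x) ` S = (\<lambda>x. c - x) -` S" by force
  ultimately show ?thesis using measurable_sets[of "\<lambda>x. c - x" borel borel S] S by simp
qed

lemma measure_preserving_on_Un:
  assumes mp: "measure_preserving_on T S1" "measure_preserving_on T S2"
    and S: "S1 \<in> sets borel" "S2 \<in> sets borel" "S1 \<inter> S2 = {}" "S1 \<union> S2 \<subseteq> circ"
    and T: "T ` (S1 \<union> S2) \<subseteq> circ" "inj_on T (S1 \<union> S2)"
  shows "measure_preserving_on T (S1 \<union> S2)"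
  unfolding measure_preserving_on_def
proof (intro allI impI)
  fix A assume A: "A \<in> sets borel" "A \<subseteq> S1 \<union> S2"
  define A1 A2 where "A1 = A \<inter> S1" and "A2 = A \<inter> S2"
  have split: "A = A1 \<union> A2" "A1 \<inter> A2 = {}" using A S by (auto simp: A1_def A2_def)
  have borel: "A1 \<in> sets borel" "A2 \<in> sets borel" using A S by (auto simp: A1_def A2_def)
  have images: "T ` A1 \<in> sets borel" "measure lebesgue (T ` A1) = measure lebesgue A1"
      "T ` A2 \<in> sets borel" "measure lebesgue (T ` A2) = measure lebesgue A2"
    using measure_preserving_onD[OF mp(1) borel(1)] measure_preserving_onD[OF mp(2) borel(2)]
    by (auto simp: A1_def A2_def)
  have sub: "A1 \<subseteq> S1 \<union> S2" "A2 \<subseteq> S1 \<union> S2" by (auto simp: A1_def A2_def)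
  then have "T ` A1 \<inter> T ` A2 = {}" using inj_on_image_Int[OF T(2)] split by (metis image_empty)
  moreover have "bounded (T ` A1 \<union> T ` A2)" "bounded (A1 \<union> A2)"
    using sub T(1) S(4) by (auto intro!: bounded_if_subset_circ)
  ultimately have "measure lebesgue (T ` A1 \<union> T ` A2) = measure lebesgue (A1 \<union> A2)"
    using measure_disjoint_Un_bounded[of "T ` A1" "T ` A2"] measure_disjoint_Un_bounded[of A1 A2]
      images borel split(2) by metis
  then show "T ` A \<in> sets borel \<and> measure lebesgue (T ` A) = measure lebesgue A"
    using images split by (simp add: image_Un)
qed

lemma sum_measure_disjoint_circ_le_1:
  assumes "finite I" "disjoint_family_on S I"
    and S: "\<And>i. i \<in> I \<Longrightarrow> S i \<in> sets borel" "\<And>i. i \<in> I \<Longrightarrow> S i \<subseteq> circ"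
  shows "(\<Sum>i\<in>I. measure lebesgue (S i)) \<le> 1"
proof -
  have lmeasurable: "S i \<in> lmeasurable" if "i \<in> I" for i
    using S that by (simp add: bounded_if_subset_circ bounded_set_imp_lmeasurable)
  have "emeasure lebesgue (S i) \<noteq> \<infinity>" if "i \<in> I" for i
    using fmeasurableD2[OF lmeasurable[OF that]] by (metis infinity_ennreal_def)
  then have "(\<Sum>i\<in>I. measure lebesgue (S i)) = measure lebesgue (\<Union>i\<in>I. S i)"
    using assms by (intro measure_finite_Union[symmetric]) auto
  also have "\<dots> \<le> measure lebesgue circ"
  proof (rule measure_mono_fmeasurable)
    show "(\<Union>i\<in>I. S i) \<in> sets lebesgue"
      using assms(1) lmeasurable by (intro sets.finite_UN) (auto dest: fmeasurableD)
  qed (use S in \<open>auto simp: circ_def bounded_set_imp_lmeasurable\<close>)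
  also have "measure lebesgue circ = 1" by (simp add: circ_def)
  finally show ?thesis .
qed

lemma inj_on_frac_if_close:
  assumes "\<And>u v. u \<in> S \<Longrightarrow> v \<in> S \<Longrightarrow> \<bar>u - v\<bar> < (1::real)"
  shows "inj_on frac S"
proof (rule inj_onI)
  fix u v assume uv: "u \<in> S" "v \<in> S" "frac u = frac v"
  then obtain n where n: "u = v + of_int n" by (elim frac_eqE)
  then have "\<bar>of_int n :: real\<bar> < 1" using assms[OF uv(1,2)] by simp
  then show "u = v" using n by simp
qed

lemma abs_diff_lt_1_if_circ: "x \<in> circ \<Longrightarrow> y \<in> circ \<Longrightarrow> \<bar>x - y\<bar> < 1"
  by (auto simp: circ_def)

lemma frac_image_measure:
  fixes B :: "real set" and n :: int
  assumes B: "B \<in> sets borel" "B \<subseteq> {of_int n - 1 ..< of_int n + 1}" and inj: "inj_on frac B"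
  shows "frac ` B \<in> sets borel \<and> measure lebesgue (frac ` B) = measure lebesgue B"
proof -
  define B1 B2 where "B1 = B \<inter> {..<of_int n}" and "B2 = B \<inter> {of_int n..}"
  have split: "B = B1 \<union> B2" "B1 \<inter> B2 = {}" by (auto simp: B1_def B2_def)
  have borel: "B1 \<in> sets borel" "B2 \<in> sets borel" using B by (auto simp: B1_def B2_def)
  have shift1: "frac ` B1 = (+) (1 - of_int n) ` B1"
    using B by (intro image_cong) (auto simp: B1_def frac_unique_iff)
  have shift2: "frac ` B2 = (+) (- of_int n) ` B2"
    using B by (intro image_cong) (auto simp: B2_def frac_unique_iff)
  have images: "frac ` B1 \<in> sets borel" "frac ` B2 \<in> sets borel"
    "measure lebesgue (frac ` B1) = measure lebesgue B1" "measure lebesgue (frac ` B2) = measure lebesgue B2"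
    unfolding shift1 shift2 using borel by (simp_all only: borel_translation measure_translation)
  have "frac ` B1 \<inter> frac ` B2 = {}"
    using inj_on_image_Int[OF inj, of B1 B2] split by auto
  moreover have "bounded (frac ` B1 \<union> frac ` B2)" by (rule bounded_if_subset_circ) auto
  moreover have "bounded (B1 \<union> B2)"
    using B(2) split(1) bounded_subset[of "{of_int n - 1..<of_int n + 1::real}" B] by simp
  ultimately have "measure lebesgue (frac ` B1 \<union> frac ` B2) = measure lebesgue (B1 \<union> B2)"
    using measure_disjoint_Un_bounded[of B1 B2] measure_disjoint_Un_bounded[of "frac ` B1" "frac ` B2"]
      images borel split(2) by metis
  then show ?thesis using images split by (simp add: image_Un)
qed

lemma measure_preserving_translation: "measure_preserving_on (\<lambda>x. frac (t + x)) circ"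
  unfolding measure_preserving_on_def
proof (intro allI impI)
  fix B :: "real set" assume B: "B \<in> sets borel" "B \<subseteq> circ"
  have borel: "(+) t ` B \<in> sets borel" using B(1) by (rule borel_translation)
  have "(+) t ` B \<subseteq> {of_int (\<lfloor>t\<rfloor> + 1) - 1 ..< of_int (\<lfloor>t\<rfloor> + 1) + 1}"
  proof
    fix y assume "y \<in> (+) t ` B"
    then obtain x where "x \<in> B" "y = t + x" by blast
    moreover have "0 \<le> x" "x < 1" using B(2) \<open>x \<in> B\<close> by (auto simp: circ_def)
    moreover have "of_int \<lfloor>t\<rfloor> \<le> t" "t < of_int \<lfloor>t\<rfloor> + 1" by linarith+
    ultimately show "y \<in> {of_int (\<lfloor>t\<rfloor> + 1) - 1 ..< of_int (\<lfloor>t\<rfloor> + 1) + 1}"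
      unfolding atLeastLessThan_iff by (intro conjI; linarith)
  qed
  moreover have "inj_on frac ((+) t ` B)"
    using B(2) by (intro inj_on_frac_if_close) (clarsimp, metis abs_diff_lt_1_if_circ abs_minus_commute subsetD)
  ultimately have "frac ` ((+) t ` B) \<in> sets borel \<and> measure lebesgue (frac ` ((+) t ` B)) = measure lebesgue B"
    using frac_image_measure[OF borel] measure_translation by metis
  then show "(\<lambda>x. frac (t + x)) ` B \<in> sets borel \<and>
      measure lebesgue ((\<lambda>x. frac (t + x)) ` B) = measure lebesgue B"
    by (simp add: image_image)
qed

lemma measure_preserving_reflection: "measure_preserving_on (\<lambda>x. frac (t - x)) circ"
  unfolding measure_preserving_on_def
proof (intro allI impI)
  fix B :: "real set" assume B: "B \<in> sets borel" "B \<subseteq> circ"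
  have borel: "(\<lambda>x. t - x) ` B \<in> sets borel" using B(1) by (rule borel_reflection)
  have "(\<lambda>x. t - x) ` B \<subseteq> {of_int \<lfloor>t\<rfloor> - 1 ..< of_int \<lfloor>t\<rfloor> + 1}"
  proof
    fix y assume "y \<in> (\<lambda>x. t - x) ` B"
    then obtain x where "x \<in> B" "y = t - x" by blast
    moreover have "0 \<le> x" "x < 1" using B(2) \<open>x \<in> B\<close> by (auto simp: circ_def)
    moreover have "of_int \<lfloor>t\<rfloor> \<le> t" "t < of_int \<lfloor>t\<rfloor> + 1" by linarith+
    ultimately show "y \<in> {of_int \<lfloor>t\<rfloor> - 1 ..< of_int \<lfloor>t\<rfloor> + 1}"
      unfolding atLeastLessThan_iff by (intro conjI; linarith)
  qed
  moreover have "inj_on frac ((\<lambda>x. t - x) ` B)"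
    using B(2) by (intro inj_on_frac_if_close) (clarsimp, metis abs_diff_lt_1_if_circ abs_minus_commute subsetD)
  moreover have "measure lebesgue ((\<lambda>x. t - x) ` B) = measure lebesgue B"
  proof -
    have "(\<lambda>x. t - x) ` B = (\<lambda>x. (-1) *\<^sub>R x + t) ` B" by (rule image_cong) auto
    then show ?thesis using measure_lebesgue_affine[of "-1" t B] by simp
  qed
  ultimately have "frac ` ((\<lambda>x. t - x) ` B) \<in> sets borel \<and>
      measure lebesgue (frac ` ((\<lambda>x. t - x) ` B)) = measure lebesgue B"
    using frac_image_measure[OF borel] by metis
  then show "(\<lambda>x. frac (t - x)) ` B \<in> sets borel \<and>
      measure lebesgue ((\<lambda>x. frac (t - x)) ` B) = measure lebesgue B"
    by (simp add: image_image)
qed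

section \<open>Iterates of partially defined maps\<close>

lemma dom_iter_subset_circ: "D \<subseteq> circ \<Longrightarrow> dom_iter D T m \<subseteq> circ"
  by (induction m) auto

lemma dom_iter_add:
  assumes "D \<subseteq> circ"
  shows "x \<in> dom_iter D T (a + b) \<longleftrightarrow> x \<in> dom_iter D T a \<and> (T ^^ a) x \<in> dom_iter D T b"
proof (induction a arbitrary: x)
  case 0
  then show ?case using dom_iter_subset_circ[OF assms, of T b] by auto
next
  case (Suc a)
  then show ?case by (simp add: funpow_swap1)
qed

lemma dom_iter_antimono: "D \<subseteq> circ \<Longrightarrow> m \<le> n \<Longrightarrow> dom_iter D T n \<subseteq> dom_iter D T m"
  using dom_iter_add[of D _ T m "n - m"] by auto

lemma funpow_in_circ: "D \<subseteq> circ \<Longrightarrow> x \<in> dom_iter D T m \<Longrightarrow> (T ^^ m) x \<in> circ"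
  using dom_iter_add[of D x T m 0] by simp

lemma inj_on_funpow_dom_iter: "inj_on T D \<Longrightarrow> inj_on (T ^^ k) (dom_iter D T k)"
proof (induction k)
  case 0
  then show ?case by simp
next
  case (Suc k)
  show ?case
  proof (rule inj_onI)
    fix x y assume x: "x \<in> dom_iter D T (Suc k)" and y: "y \<in> dom_iter D T (Suc k)"
      and eq: "(T ^^ Suc k) x = (T ^^ Suc k) y"
    from eq have "(T ^^ k) (T x) = (T ^^ k) (T y)" by (simp add: funpow_swap1)
    with x y Suc have "T x = T y" by (auto dest: inj_onD)
    with x y Suc.prems show "x = y" by (auto dest: inj_onD)
  qed
qed

lemma finite_circ_diff_dom_iter:
  assumes "finite (circ - D)" "inj_on T D" "T ` D \<subseteq> circ"
  shows "finite (circ - dom_iter D T m)"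
proof (induction m)
  case 0
  then show ?case by simp
next
  case (Suc m)
  let ?S = "{x \<in> D. T x \<in> circ - dom_iter D T m}"
  have "finite (T ` ?S)" using Suc finite_subset[of "T ` ?S"] by blast
  moreover have "inj_on T ?S" using assms(2) by (rule inj_on_subset) auto
  ultimately have "finite ?S" using finite_imageD by blast
  moreover have "circ - dom_iter D T (Suc m) \<subseteq> (circ - D) \<union> ?S" using assms(3) by auto
  ultimately show ?case using assms(1) finite_subset by blast
qed

lemma measure_preserving_on_funpow:
  "measure_preserving_on T D \<Longrightarrow> measure_preserving_on (T ^^ j) (dom_iter D T j)"
proof (induction j)
  case 0
  then show ?case by (simp add: measure_preserving_on_def)
next
  case (Suc j)
  show ?case
    unfolding measure_preserving_on_def
  proof (intro allI impI)
    fix A assume A: "A \<in> sets borel" "A \<subseteq> dom_iter D T (Suc j)"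
    then have TA: "T ` A \<in> sets borel" "measure lebesgue (T ` A) = measure lebesgue A"
      using measure_preserving_onD[OF Suc.prems] by auto
    moreover have "T ` A \<subseteq> dom_iter D T j" using A by auto
    moreover have "(T ^^ Suc j) ` A = (T ^^ j) ` (T ` A)" by (simp only: funpow_Suc_right image_comp)
    ultimately show "(T ^^ Suc j) ` A \<in> sets borel \<and> measure lebesgue ((T ^^ Suc j) ` A) = measure lebesgue A"
      using measure_preserving_onD[OF Suc.IH[OF Suc.prems] TA(1)] by metis
  qed
qed

text \<open>The orbit segment from \<open>x\<close> to \<open>T^k x\<close>, reflected by \<open>\<sigma>\<close>, runs backwards from
  \<open>\<sigma> (T^k x) = T (T^k x)\<close> to \<open>\<sigma> x = T x\<close>, closing a cycle of length \<open>2k\<close>.\<close>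

lemma periodic_point_of_reversed_return:
  assumes D: "D \<subseteq> circ"
    and reverses: "\<And>y. y \<in> D \<Longrightarrow> \<sigma> (T y) \<in> D \<and> T (\<sigma> (T y)) = \<sigma> y"
    and \<sigma>_circ: "\<And>y. \<sigma> y \<in> circ"
    and k: "1 \<le> k" and x: "x \<in> dom_iter D T (Suc k)"
    and ends: "T x = \<sigma> x" "T ((T ^^ k) x) = \<sigma> ((T ^^ k) x)"
  shows "periodic_point D T (T x)"
proof -
  define y where "y i = (T ^^ i) x" for i
  have y_D: "y i \<in> D" if "i \<le> k" for i
  proof -
    have "x \<in> dom_iter D T (i + 1)" using x that dom_iter_antimono[OF D, of "i + 1" "Suc k"] by auto
    then show ?thesis using dom_iter_add[OF D, of x T i 1] by (simp add: y_def)
  qed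
  have reversed: "\<sigma> (y k) \<in> dom_iter D T j \<and> (T ^^ j) (\<sigma> (y k)) = \<sigma> (y (k - j))" if "j \<le> k" for j
    using that
  proof (induction j)
    case 0
    then show ?case by (simp add: \<sigma>_circ)
  next
    case (Suc j)
    define i where "i = k - Suc j"
    have "k - j = Suc i" using Suc.prems by (simp add: i_def)
    then have "i \<le> k" "y (k - j) = T (y i)" by (simp_all add: y_def)
    then have IH: "\<sigma> (y k) \<in> dom_iter D T j" "(T ^^ j) (\<sigma> (y k)) = \<sigma> (T (y i))"
      using Suc by auto
    have step: "\<sigma> (T (y i)) \<in> D" "T (\<sigma> (T (y i))) = \<sigma> (y i)"
      using reverses[OF y_D[OF \<open>i \<le> k\<close>]] by auto
    then have "\<sigma> (y k) \<in> dom_iter D T (j + 1)"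
      using dom_iter_add[OF D, of "\<sigma> (y k)" T j 1] IH \<sigma>_circ by simp
    moreover have "(T ^^ Suc j) (\<sigma> (y k)) = \<sigma> (y (k - Suc j))"
      using IH(2) step(2) by (simp add: i_def)
    ultimately show ?case by simp
  qed
  obtain n where n: "k = Suc n" using k by (cases k) auto
  have "x \<in> dom_iter D T (1 + (n + 1))" using x n by simp
  then have Tx_dom: "T x \<in> dom_iter D T (n + 1)" using dom_iter_add[OF D, of x T 1 "n + 1"] by simp
  have Tx_iter: "(T ^^ n) (T x) = y k" by (simp add: y_def n funpow_swap1)
  have yk: "y k \<in> dom_iter D T (1 + k)" "(T ^^ (1 + k)) (y k) = T x"
    using reversed[of k] y_D[of k] ends by (simp_all add: funpow_swap1 y_def)
  have "T x \<in> dom_iter D T (n + (1 + k))"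
    using dom_iter_add[OF D, of "T x" T n "1 + k"] Tx_dom dom_iter_antimono[OF D, of n "n + 1"] Tx_iter yk(1)
    by auto
  moreover have "(T ^^ (n + (1 + k))) (T x) = (T ^^ (1 + k)) ((T ^^ n) (T x))"
    by (simp only: add.commute[of n] funpow_add comp_apply)
  then have "(T ^^ (n + (1 + k))) (T x) = T x" using Tx_iter yk(2) by simp
  ultimately show ?thesis unfolding periodic_point_def by (intro exI[of _ "n + (1 + k)"]) auto
qed

section \<open>Piecewise isometries of the circle\<close>

locale circle_piecewise_isometry =
  fixes D :: "real set" and T :: "real \<Rightarrow> real"
  assumes domain_subset: "D \<subseteq> circ"
    and maps_into_circ: "T ` D \<subseteq> circ"
    and inj: "inj_on T D"
    and finite_gaps: "finite (circ - D)"
    and measure_preserving: "measure_preserving_on T D"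
    and locally_isometric: "\<And>p. p \<in> D \<Longrightarrow> \<exists>e>0. \<exists>s\<in>{1, -1}.
           \<forall>d. \<bar>d\<bar> < e \<longrightarrow> frac (p + d) \<in> D \<and> T (frac (p + d)) = frac (T p + s * d)"
begin

lemmas dom_iter_add = dom_iter_add[OF domain_subset]
   and dom_iter_antimono = dom_iter_antimono[OF domain_subset]
   and dom_iter_subset_circ = dom_iter_subset_circ[OF domain_subset]

lemma funpow_images_disjoint_if_no_return:
  assumes V: "V \<subseteq> dom_iter D T N"
    and no_return: "\<And>x k. x \<in> V \<Longrightarrow> 1 \<le> k \<Longrightarrow> x \<in> dom_iter D T k \<Longrightarrow> (T ^^ k) x \<notin> V"
    and ij: "i < j" "j \<le> N"
  shows "(T ^^ i) ` V \<inter> (T ^^ j) ` V = {}"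
proof (rule ccontr)
  assume "(T ^^ i) ` V \<inter> (T ^^ j) ` V \<noteq> {}"
  then obtain a b where ab: "a \<in> V" "b \<in> V" "(T ^^ i) a = (T ^^ j) b" by auto
  define k where "k = j - i"
  have "b \<in> dom_iter D T (k + i)" using ab(2) V dom_iter_antimono[of j N] ij by (auto simp: k_def)
  then have b_k: "b \<in> dom_iter D T k" "(T ^^ k) b \<in> dom_iter D T i" using dom_iter_add by blast+
  have a_i: "a \<in> dom_iter D T i" using ab(1) V dom_iter_antimono[of i N] ij by auto
  have "j = i + k" using ij by (simp add: k_def)
  then have "(T ^^ i) a = (T ^^ i) ((T ^^ k) b)" using ab(3) by (simp add: funpow_add)
  then have "a = (T ^^ k) b" using inj_onD[OF inj_on_funpow_dom_iter[OF inj] _ a_i b_k(2)] by blast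
  moreover have "1 \<le> k" using ij by (simp add: k_def)
  ultimately show False using no_return ab(1,2) b_k(1) by blast
qed

theorem poincare_recurrence:
  assumes U: "U \<in> sets borel" "U \<subseteq> circ" "0 < measure lebesgue U"
  shows "\<exists>x\<in>U. \<exists>k\<ge>1. x \<in> dom_iter D T k \<and> (T ^^ k) x \<in> U"
proof (rule ccontr)
  assume no_return: "\<not> ?thesis"
  obtain N :: nat where "1 / measure lebesgue U < real N" using reals_Archimedean2 by blast
  then have N: "1 < real (Suc N) * measure lebesgue U" using U(3) by (simp add: field_simps)
  define V where "V = U - (circ - dom_iter D T N)"
  have finite: "finite (circ - dom_iter D T N)"
    using finite_circ_diff_dom_iter[OF finite_gaps inj maps_into_circ] .
  have V: "V \<in> sets borel" "V \<subseteq> dom_iter D T N"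
    using sets.Diff[OF U(1) borel_closed[OF finite_imp_closed[OF finite]]] U(2) by (auto simp: V_def)
  have "measure lebesgue V = measure lebesgue U"
    using measure_Diff_null_set[of U lebesgue] U(1) finite
    by (simp add: V_def negligible_finite negligible_iff_null_sets[symmetric])
  define S where "S j = (T ^^ j) ` V" for j
  have S: "S j \<in> sets borel" "S j \<subseteq> circ" "measure lebesgue (S j) = measure lebesgue U"
    if "j \<le> N" for j
  proof -
    have V_j: "V \<subseteq> dom_iter D T j" using V(2) dom_iter_antimono[OF that] by blast
    then show "S j \<in> sets borel" "measure lebesgue (S j) = measure lebesgue U"
      using measure_preserving_onD[OF measure_preserving_on_funpow[OF measure_preserving] V(1) V_j]
        \<open>measure lebesgue V = measure lebesgue U\<close>
      unfolding S_def by metis+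
    show "S j \<subseteq> circ" using V_j funpow_in_circ[OF domain_subset] by (auto simp: S_def)
  qed
  have "disjoint_family_on S {..N}"
  proof -
    have "S i \<inter> S j = {}" if "i < j" "j \<le> N" for i j
      unfolding S_def using funpow_images_disjoint_if_no_return[OF V(2) _ that] no_return
      by (auto simp: V_def)
    then show ?thesis unfolding disjoint_family_on_def by (metis Int_commute atMost_iff nat_neq_iff)
  qed
  then have "(\<Sum>j\<le>N. measure lebesgue (S j)) \<le> 1"
    using S by (intro sum_measure_disjoint_circ_le_1) auto
  then show False using N S by simp
qed

lemma locally_isometric_funpow:
  "p \<in> dom_iter D T m \<Longrightarrow> \<exists>e>0. \<exists>s\<in>{1, -1}. \<forall>d. \<bar>d\<bar> < e \<longrightarrow>
     frac (p + d) \<in> dom_iter D T m \<and> (T ^^ m) (frac (p + d)) = frac ((T ^^ m) p + s * d)"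
proof (induction m arbitrary: p)
  case 0
  then show ?case by (intro exI[of _ 1] conjI bexI[of _ 1]) auto
next
  case (Suc m)
  then have "p \<in> D" "T p \<in> dom_iter D T m" by auto
  obtain e1 s1 where e1: "e1 > 0" "s1 \<in> {1, -1}"
    "\<And>d. \<bar>d\<bar> < e1 \<Longrightarrow> frac (p + d) \<in> D \<and> T (frac (p + d)) = frac (T p + s1 * d)"
    using locally_isometric[OF \<open>p \<in> D\<close>] by blast
  obtain e2 s2 where e2: "e2 > 0" "s2 \<in> {1, -1}"
    "\<And>d. \<bar>d\<bar> < e2 \<Longrightarrow> frac (T p + d) \<in> dom_iter D T m \<and>
        (T ^^ m) (frac (T p + d)) = frac ((T ^^ m) (T p) + s2 * d)"
    using Suc.IH[OF \<open>T p \<in> dom_iter D T m\<close>] by blast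
  have "frac (p + d) \<in> dom_iter D T (Suc m) \<and>
      (T ^^ Suc m) (frac (p + d)) = frac ((T ^^ Suc m) p + (s2 * s1) * d)"
    if d: "\<bar>d\<bar> < min e1 e2" for d
  proof -
    have "\<bar>s1 * d\<bar> < e2" using e1(2) d by (auto simp: abs_mult)
    then show ?thesis using e1(3)[of d] e2(3)[of "s1 * d"] d by (simp add: funpow_swap1 mult.assoc)
  qed
  moreover have "s2 * s1 \<in> {1, -1}" using e1(2) e2(2) by auto
  ultimately show ?case using e1(1) e2(1) by (intro exI[of _ "min e1 e2"] conjI bexI[of _ "s2 * s1"]) auto
qed

text \<open>Near a periodic point the return map is a translation or a reflection, so nearby points
  are periodic, with at most twice the period.\<close>

lemma periodic_points_open:
  assumes "periodic_point D T p"
  obtains e where "0 < e" "\<And>x. x \<in> circ \<Longrightarrow> \<bar>x - p\<bar> < e \<Longrightarrow> periodic_point D T x"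
proof -
  obtain m where m: "1 \<le> m" "p \<in> dom_iter D T m" "(T ^^ m) p = p"
    using assms unfolding periodic_point_def by blast
  obtain e s where es: "e > 0" "s \<in> {1, -1}"
    "\<And>d. \<bar>d\<bar> < e \<Longrightarrow> frac (p + d) \<in> dom_iter D T m \<and> (T ^^ m) (frac (p + d)) = frac (p + s * d)"
    using locally_isometric_funpow[OF m(2)] m(3) by metis
  have p: "p \<in> circ" using m(2) dom_iter_subset_circ by blast
  have "periodic_point D T x" if x: "x \<in> circ" "\<bar>x - p\<bar> < e" for x
  proof -
    have near: "frac (p + (x - p)) = x" "frac (p + (p - x)) = frac (2 * p - x)" using x by simp_all
    have x_m: "x \<in> dom_iter D T m" "(T ^^ m) x = frac (p + s * (x - p))"
      using es(3)[of "x - p"] x near by auto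
    show ?thesis
    proof (cases "s = 1")
      case True
      then show ?thesis using x_m m(1) x(1) unfolding periodic_point_def by auto
    next
      case False
      then have s: "s = -1" using es(2) by simp
      have "\<bar>p - x\<bar> < e" using x by simp
      then have "frac (p + (p - x)) \<in> dom_iter D T m" "(T ^^ m) (frac (p + (p - x))) = x"
        using es(3)[of "p - x"] s x by auto
      moreover have "(T ^^ m) x = frac (p + (p - x))" using x_m(2) s by simp
      ultimately have "x \<in> dom_iter D T (m + m)" "(T ^^ (m + m)) x = x"
        using dom_iter_add[of x T m m] x_m(1) by (simp_all add: funpow_add)
      then show ?thesis using m(1) unfolding periodic_point_def by (intro exI[of _ "m + m"]) auto
    qed
  qed
  then show ?thesis using es(1) that by blast
qed

lemma periodic_point_funpow:
  assumes P: "1 \<le> P" "z \<in> dom_iter D T P" "(T ^^ P) z = z"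
  shows "z \<in> dom_iter D T i \<and> (T ^^ i) z = (T ^^ (i mod P)) z"
proof (induction i rule: less_induct)
  case (less i)
  show ?case
  proof (cases "i < P")
    case True
    then show ?thesis using P(2) dom_iter_antimono[of i P] by auto
  next
    case False
    define i' where "i' = i - P"
    have i: "i = P + i'" "i' < i" using False P(1) by (auto simp: i'_def)
    then have IH: "z \<in> dom_iter D T i'" "(T ^^ i') z = (T ^^ (i' mod P)) z" using less by auto
    have "z \<in> dom_iter D T (P + i')" using dom_iter_add[of z T P i'] P(2,3) IH(1) by simp
    moreover have "(T ^^ (P + i')) z = (T ^^ i') ((T ^^ P) z)"
      by (simp only: add.commute[of P] funpow_add comp_apply)
    ultimately show ?thesis using IH P(3) i(1) by simp
  qed
qed

lemma orbit_subset_circ: "orbit D T q \<subseteq> circ"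
  using funpow_in_circ[OF domain_subset] dom_iter_subset_circ by (fastforce simp: orbit_def)

lemma finite_orbit_through_periodic:
  assumes P: "1 \<le> P" "z \<in> dom_iter D T P" "(T ^^ P) z = z"
    and q: "q \<in> dom_iter D T j" "(T ^^ j) q = z"
  shows "finite (orbit D T q)"
proof -
  define Z where "Z = (\<lambda>i. (T ^^ i) z) ` {..<P}"
  have Z: "(T ^^ i) z \<in> Z" for i
    using periodic_point_funpow[OF P, of i] P(1) unfolding Z_def by auto
  have forward: "(T ^^ m) q \<in> (\<lambda>i. (T ^^ i) q) ` {..<j} \<union> Z" for m
  proof (cases "m < j")
    case False
    then have "(T ^^ m) q = (T ^^ (m - j)) ((T ^^ j) q)"
      by (metis funpow_add le_add_diff_inverse2 not_less comp_apply)
    then show ?thesis using Z q(2) by auto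
  qed auto
  have backward: "r \<in> Z" if r: "r \<in> dom_iter D T m" "(T ^^ m) r = q" for r m
  proof -
    define K where "K = m + j"
    have r_K: "r \<in> dom_iter D T K" "(T ^^ K) r = z"
      using dom_iter_add[of r T m j] r q by (simp_all add: K_def add.commute[of m] funpow_add)
    define w where "w = (T ^^ (K * P - K)) z"
    have K_le: "K \<le> K * P" using P(1) by simp
    then have "z \<in> dom_iter D T ((K * P - K) + K)" using periodic_point_funpow[OF P] by simp
    then have w_K: "w \<in> dom_iter D T K" using dom_iter_add unfolding w_def by blast
    have "(T ^^ K) w = (T ^^ ((K * P - K) + K)) z"
      unfolding w_def by (simp only: add.commute[of "K * P - K"] funpow_add comp_apply)
    also have "\<dots> = z" using K_le periodic_point_funpow[OF P, of "K * P"] by simp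
    finally have "r = w" using inj_onD[OF inj_on_funpow_dom_iter[OF inj, of K]] r_K w_K by metis
    then show ?thesis using Z unfolding w_def by simp
  qed
  have "orbit D T q \<subseteq> (\<lambda>i. (T ^^ i) q) ` {..<j} \<union> Z"
    unfolding orbit_def using forward backward by blast
  then show ?thesis by (rule finite_subset) (simp add: Z_def)
qed

lemma finite_orbit_if_periodic_in_orbit:
  assumes "z \<in> orbit D T q" "periodic_point D T z"
  shows "finite (orbit D T q)"
proof -
  obtain P where P: "1 \<le> P" "z \<in> dom_iter D T P" "(T ^^ P) z = z"
    using assms(2) unfolding periodic_point_def by blast
  from assms(1) consider (forward) j where "q \<in> dom_iter D T j" "z = (T ^^ j) q"
    | (backward) j where "z \<in> dom_iter D T j" "(T ^^ j) z = q"
    unfolding orbit_def by blast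
  then show ?thesis
  proof cases
    case forward
    then show ?thesis using finite_orbit_through_periodic[OF P] by metis
  next
    case backward
    have "z \<in> dom_iter D T (j + P)" using periodic_point_funpow[OF P] by blast
    then have q_P: "q \<in> dom_iter D T P" using dom_iter_add[of z T j P] backward by blast
    have "(T ^^ P) q = (T ^^ j) ((T ^^ P) z)"
      using backward(2) by (metis add.commute comp_apply funpow_add)
    then have "(T ^^ P) q = q" using P(3) backward(2) by simp
    moreover have "q \<in> dom_iter D T 0" using q_P dom_iter_subset_circ by auto
    ultimately show ?thesis using finite_orbit_through_periodic[OF P(1) q_P, of q 0] by simp
  qed
qed

theorem not_transitive_if_periodic_point:
  assumes "periodic_point D T p"
  shows "\<not> transitive D T"
proof
  assume "transitive D T"
  then obtain q where q: "circ \<subseteq> closure (orbit D T q)" unfolding transitive_def by blast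
  obtain e where e: "0 < e" "\<And>x. x \<in> circ \<Longrightarrow> \<bar>x - p\<bar> < e \<Longrightarrow> periodic_point D T x"
    using periodic_points_open[OF assms] by blast
  have "p \<in> circ" using assms dom_iter_subset_circ unfolding periodic_point_def by blast
  then obtain z where z: "z \<in> orbit D T q" "dist z p < e"
    using q e(1) closure_approachable by blast
  then have "periodic_point D T z" using e(2) orbit_subset_circ by (auto simp: dist_real_def)
  then have "finite (orbit D T q)" using finite_orbit_if_periodic_in_orbit z(1) by blast
  then have "finite circ" using q by (metis closure_closed finite_imp_closed finite_subset)
  then show False using infinite_Ico[of "0::real" 1] by (simp add: circ_def)
qed

end

section \<open>3-CETs with one flip\<close>

text \<open>Normal form: the flipped arc starts at \<open>cf\<close> and is followed, in the positive direction,
  by the translated arcs starting at \<open>ca\<close> and \<open>cb\<close>.\<close>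

locale cet3_one_flip =
  fixes D :: "real set" and T :: "real \<Rightarrow> real"
    and cf ca cb l g h tf ta tb :: real
  assumes lengths_pos: "0 < l" "0 < g" "0 < h" and lengths_sum: "l + g + h = 1"
    and cf_circ: "cf \<in> circ"
    and ca_cong: "ca - cf - l \<in> \<int>" and cb_cong: "cb - ca - g \<in> \<int>"
    and domain_eq: "D = arc cf l \<union> arc ca g \<union> arc cb h"
    and arcs_disjoint: "arc cf l \<inter> arc ca g = {}" "arc cf l \<inter> arc cb h = {}" "arc ca g \<inter> arc cb h = {}"
    and T_flip: "\<And>x. x \<in> arc cf l \<Longrightarrow> T x = frac (tf - x)"
    and T_a: "\<And>x. x \<in> arc ca g \<Longrightarrow> T x = frac (ta + x)"
    and T_b: "\<And>x. x \<in> arc cb h \<Longrightarrow> T x = frac (tb + x)"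
    and inj: "inj_on T D"
    and jump_at_cb: "frac (ta + cb) \<noteq> frac (tb + cb)"
    and finite_gaps: "finite (circ - D)"
begin

lemma lengths_le_1: "l \<le> 1" "g \<le> 1" "h \<le> 1"
  using lengths_pos lengths_sum by auto

lemma cf_cong: "cf - cb - h \<in> \<int>"
proof -
  have "cf - cb - h = - (ca - cf - l) - (cb - ca - g) - 1" using lengths_sum by linarith
  then show ?thesis using ca_cong cb_cong by (metis Ints_1 Ints_diff Ints_minus)
qed

lemma image_arcs:
  "T ` arc cf l = arc (tf - cf - l) l" "T ` arc ca g = arc (ta + ca) g" "T ` arc cb h = arc (tb + cb) h"
  using reflection_image_arc[OF lengths_le_1(1), of tf cf] translation_image_arc[of ta ca g]
    translation_image_arc[of tb cb h] T_flip T_a T_b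
  by (auto cong: image_cong)

lemma image_arcs_disjoint:
  "arc (tf - cf - l) l \<inter> arc (ta + ca) g = {}" "arc (tf - cf - l) l \<inter> arc (tb + cb) h = {}"
  "arc (ta + ca) g \<inter> arc (tb + cb) h = {}"
  using inj_on_image_Int[OF inj] arcs_disjoint unfolding domain_eq image_arcs[symmetric]
  by (metis Un_upper1 Un_upper2 image_empty le_supI1)+

text \<open>The images of the three arcs tile the circle; the jump of \<open>T\<close> at \<open>cb\<close> rules out that
  they keep their cyclic order, so the flip reverses it.\<close>

lemma image_order_reversed:
  "frac ((tf - cf - l) - (ta + ca)) = g" "frac ((tb + cb) - (tf - cf - l)) = l"
proof -
  have "frac ((tb + cb) - (ta + ca)) \<noteq> g"
  proof
    assume "frac ((tb + cb) - (ta + ca)) = g"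
    then have "(tb + cb) - (ta + ca) - g \<in> \<int>" by (simp add: frac_unique_iff)
    moreover have "(ta + cb) - (tb + cb) = (cb - ca - g) - ((tb + cb) - (ta + ca) - g)" by simp
    ultimately have "frac (ta + cb) = frac (tb + cb)"
      using cb_cong by (metis Ints_diff frac_eq_iff_diff_Ints)
    with jump_at_cb show False ..
  qed
  then show "frac ((tf - cf - l) - (ta + ca)) = g" "frac ((tb + cb) - (tf - cf - l)) = l"
    using three_disjoint_arcs_abut[OF image_arcs_disjoint lengths_pos lengths_sum] by auto
qed

lemma reverses: "y \<in> D \<Longrightarrow> frac (tf - T y) \<in> D \<and> T (frac (tf - T y)) = frac (tf - y)"
proof -
  assume "y \<in> D"
  have sym_a: "tf - ta - ca - g - ca \<in> \<int>"
  proof -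
    have "(tf - cf - l) - (ta + ca) - g \<in> \<int>" using image_order_reversed(1) by (simp add: frac_unique_iff)
    moreover have "tf - ta - ca - g - ca = ((tf - cf - l) - (ta + ca) - g) - (ca - cf - l)" by simp
    ultimately show ?thesis using ca_cong by (metis Ints_diff)
  qed
  have sym_b: "tf - tb - cb - h - cb \<in> \<int>"
  proof -
    have "(tb + cb) - (tf - cf - l) - l \<in> \<int>" using image_order_reversed(2) by (simp add: frac_unique_iff)
    moreover have "tf - tb - cb - h - cb = (cf - cb - h) - ((tb + cb) - (tf - cf - l) - l)" by simp
    ultimately show ?thesis using cf_cong by (metis Ints_diff)
  qed
  consider "y \<in> arc cf l" | "y \<in> arc ca g" | "y \<in> arc cb h" using \<open>y \<in> D\<close> domain_eq by auto
  then show ?thesis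
  proof cases
    case 1
    then have "frac (tf - T y) = y" using T_flip arc_subset_circ by (fastforce simp: frac_diff_simp)
    then show ?thesis using 1 \<open>y \<in> D\<close> T_flip by simp
  next
    case 2
    then show ?thesis
      using reflection_reverses_translation[OF T_a sym_a lengths_le_1(2)] domain_eq by auto
  next
    case 3
    then show ?thesis
      using reflection_reverses_translation[OF T_b sym_b lengths_le_1(3)] domain_eq by auto
  qed
qed

lemma locally_isometric:
  assumes "p \<in> D"
  shows "\<exists>e>0. \<exists>s\<in>{1, -1}. \<forall>d. \<bar>d\<bar> < e \<longrightarrow> frac (p + d) \<in> D \<and> T (frac (p + d)) = frac (T p + s * d)"
proof -
  have piece: "\<exists>e>0. \<exists>s\<in>{1, -1}. \<forall>d. \<bar>d\<bar> < e \<longrightarrow> frac (p + d) \<in> D \<and> T (frac (p + d)) = frac (T p + s * d)"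
    if p: "p \<in> arc c L" "L \<le> 1" and on_arc: "arc c L \<subseteq> D" "s \<in> {1, -1}"
      "\<And>x. x \<in> arc c L \<Longrightarrow> T x = frac (t + s * x)" for c L s t
  proof -
    obtain e where "0 < e" "\<And>d. \<bar>d\<bar> < e \<Longrightarrow> frac (p + d) \<in> arc c L"
      using arc_neighbourhood[OF p] by blast
    moreover have "frac (t + s * frac (p + d)) = frac (frac (t + s * p) + s * d)" for d
      using on_arc(2) by (auto simp: frac_diff_simp algebra_simps)
    ultimately show ?thesis using p on_arc by (intro exI[of _ e] conjI bexI[of _ s]) auto
  qed
  consider "p \<in> arc cf l" | "p \<in> arc ca g" | "p \<in> arc cb h" using assms domain_eq by auto
  then show ?thesis
  proof cases
    case 1
    show ?thesis by (rule piece[of cf l "-1" tf]) (use 1 T_flip lengths_le_1 domain_eq in auto)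
  next
    case 2
    show ?thesis by (rule piece[of ca g 1 ta]) (use 2 T_a lengths_le_1 domain_eq in auto)
  next
    case 3
    show ?thesis by (rule piece[of cb h 1 tb]) (use 3 T_b lengths_le_1 domain_eq in auto)
  qed
qed

lemma measure_preserving: "measure_preserving_on T D"
proof -
  have "measure_preserving_on (\<lambda>x. frac (tf - x)) (arc cf l)"
    "measure_preserving_on (\<lambda>x. frac (ta + x)) (arc ca g)"
    "measure_preserving_on (\<lambda>x. frac (tb + x)) (arc cb h)"
    using measure_preserving_reflection measure_preserving_translation arc_subset_circ
    by (blast intro: measure_preserving_on_subset)+
  then have pieces: "measure_preserving_on T (arc cf l)" "measure_preserving_on T (arc ca g)"
      "measure_preserving_on T (arc cb h)"
    using measure_preserving_on_cong T_flip T_a T_b by metis+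
  have T_circ: "T ` D \<subseteq> circ" using image_arcs arc_subset_circ unfolding domain_eq by (simp add: image_Un)
  have "measure_preserving_on T (arc cf l \<union> arc ca g)"
  proof (rule measure_preserving_on_Un[OF pieces(1,2) arc_borel arc_borel arcs_disjoint(1)])
    show "arc cf l \<union> arc ca g \<subseteq> circ" using arc_subset_circ by blast
    show "T ` (arc cf l \<union> arc ca g) \<subseteq> circ" "inj_on T (arc cf l \<union> arc ca g)"
      using T_circ inj unfolding domain_eq by (auto intro: inj_on_subset)
  qed
  moreover have "(arc cf l \<union> arc ca g) \<inter> arc cb h = {}" using arcs_disjoint by blast
  ultimately show ?thesis
    unfolding domain_eq
  proof (rule measure_preserving_on_Un[OF _ pieces(3) sets.Un[OF arc_borel arc_borel] arc_borel])
    show "arc cf l \<union> arc ca g \<union> arc cb h \<subseteq> circ" using arc_subset_circ by blast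
    show "T ` (arc cf l \<union> arc ca g \<union> arc cb h) \<subseteq> circ" "inj_on T (arc cf l \<union> arc ca g \<union> arc cb h)"
      using T_circ inj unfolding domain_eq by auto
  qed
qed

sublocale circle_piecewise_isometry D T
proof
  show "D \<subseteq> circ" "T ` D \<subseteq> circ"
    using image_arcs arc_subset_circ unfolding domain_eq by (auto simp: image_Un)
qed (rule inj finite_gaps measure_preserving locally_isometric | assumption)+

theorem periodic_point_exists: "\<exists>p. periodic_point D T p"
proof -
  define \<delta> where "\<delta> = min l (1 - cf)"
  have \<delta>: "0 < \<delta>" "\<delta> \<le> l" "cf + \<delta> \<le> 1" using lengths_pos cf_circ by (auto simp: \<delta>_def circ_def)
  define U where "U = {cf<..<cf + \<delta>}"
  have U_arc: "U \<subseteq> arc cf l" unfolding U_def by (rule interval_subset_arc[OF cf_circ \<delta>])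
  then have U_D: "U \<subseteq> D" and U_circ: "U \<subseteq> circ" using domain_eq arc_subset_circ by blast+
  have "measure lebesgue U = \<delta>" using \<delta>(1) by (simp add: U_def)
  then obtain x k where x: "x \<in> U" "1 \<le> k" "x \<in> dom_iter D T k" "(T ^^ k) x \<in> U"
    using poincare_recurrence[of U] U_circ \<delta>(1) by (auto simp: U_def)
  have "x \<in> dom_iter D T (Suc k)"
    using dom_iter_add[of x T k 1] x U_D maps_into_circ by auto
  moreover have "T x = frac (tf - x)" "T ((T ^^ k) x) = frac (tf - (T ^^ k) x)"
    using x U_arc T_flip by auto
  ultimately have "periodic_point D T (T x)"
    using periodic_point_of_reversed_return[where \<sigma> = "\<lambda>u. frac (tf - u)", OF domain_subset reverses]
      x(2) by simp
  then show ?thesis ..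
qed

end

lemma cet_data_3_arcs:
  assumes "cet_data 3 c t fl D T"
  shows "0 \<le> c 0" "c 0 < c 1" "c 1 < c 2" "c 2 < 1"
    and "arc (c 0) (cut_len 3 c 0) = {c 0<..<c 1}" "arc (c 1) (cut_len 3 c 1) = {c 1<..<c 2}"
      "arc (c 2) (cut_len 3 c 2) = {c 2<..<1} \<union> {0..<c 0}"
    and "D = arc (c 0) (cut_len 3 c 0) \<union> arc (c 1) (cut_len 3 c 1) \<union> arc (c 2) (cut_len 3 c 2)"
proof -
  have c0: "0 \<le> c 0" and "c (3 - 1) < 1" and mono: "\<forall>i. Suc i < 3 \<longrightarrow> c i < c (Suc i)"
    and D_cut: "D = (\<Union>i<3. cut_int 3 c i)"
    using assms unfolding cet_data_def by blast+
  then show "0 \<le> c 0" "c 2 < 1" by simp_all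
  show "c 0 < c 1" "c 1 < c 2"
    using mono[rule_format, of 0] mono[rule_format, of 1] by (simp_all add: numeral_2_eq_2)
  with c0 \<open>c 2 < 1\<close> show "arc (c 0) (cut_len 3 c 0) = {c 0<..<c 1}"
      "arc (c 1) (cut_len 3 c 1) = {c 1<..<c 2}" "arc (c 2) (cut_len 3 c 2) = {c 2<..<1} \<union> {0..<c 0}"
    using arc_eq_interval[of "c 0" "c 1 - c 0"] arc_eq_interval[of "c 1" "c 2 - c 1"]
      arc_eq_wrapped_interval[of "c 0" "c 2"] by (simp_all add: cut_len_def numeral_2_eq_2)
  have "{..<3::nat} = {0, 1, 2}" by auto
  then show "D = arc (c 0) (cut_len 3 c 0) \<union> arc (c 1) (cut_len 3 c 1) \<union> arc (c 2) (cut_len 3 c 2)"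
    unfolding D_cut cut_int_def by auto
qed

lemma cet_data_3_one_flip:
  assumes cd: "cet_data 3 c t fl D T" and f: "f < 3" "fl f"
    and unflipped: "\<not> fl ((f + 1) mod 3)" "\<not> fl ((f + 2) mod 3)"
  defines "a \<equiv> (f + 1) mod 3" and "b \<equiv> (f + 2) mod 3"
  shows "cet3_one_flip D T (c f) (c a) (c b) (cut_len 3 c f) (cut_len 3 c a) (cut_len 3 c b)
           (t f) (t a) (t b)"
proof -
  note c = cet_data_3_arcs(1-4)[OF cd] and arcs = cet_data_3_arcs(5-7)[OF cd]
    and D = cet_data_3_arcs(8)[OF cd]
  have T_cut: "\<forall>i<3. \<forall>x\<in>cut_int 3 c i. T x = piece t fl i x" and inj: "inj_on T D"
    and jumps: "\<forall>i<3. piece t fl ((i + 3 - 1) mod 3) (c i) \<noteq> piece t fl i (c i)"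
    using cd unfolding cet_data_def by blast+
  have cyclic: "(f = 0 \<and> a = 1 \<and> b = 2) \<or> (f = 1 \<and> a = 2 \<and> b = 0) \<or> (f = 2 \<and> a = 0 \<and> b = 1)"
  proof -
    have "f = 0 \<or> f = 1 \<or> f = 2" using f(1) by auto
    then show ?thesis unfolding a_def b_def by (elim disjE) simp_all
  qed
  have "finite (circ - D)"
  proof (rule finite_subset)
    show "circ - D \<subseteq> {c 0, c 1, c 2}"
      unfolding D arcs circ_def using c by auto
  qed simp
  moreover have "frac (t a + c b) \<noteq> frac (t b + c b)"
  proof -
    have "b < 3" "(b + 3 - 1) mod 3 = a" using cyclic by auto
    then show ?thesis
      using jumps[rule_format, of b] unflipped unfolding piece_def a_def[symmetric] b_def[symmetric] by simp
  qed
  moreover have T_f: "T x = frac (t f - x)" if "x \<in> arc (c f) (cut_len 3 c f)" for x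
    using T_cut[rule_format, of f x] f that unfolding cut_int_def piece_def by simp
  moreover have "T x = frac (t a + x)" if "x \<in> arc (c a) (cut_len 3 c a)" for x
    using T_cut[rule_format, of a x] cyclic unflipped that
    unfolding cut_int_def piece_def a_def[symmetric] by auto
  moreover have "T x = frac (t b + x)" if "x \<in> arc (c b) (cut_len 3 c b)" for x
    using T_cut[rule_format, of b x] cyclic unflipped that
    unfolding cut_int_def piece_def b_def[symmetric] by auto
  moreover have "D = arc (c f) (cut_len 3 c f) \<union> arc (c a) (cut_len 3 c a) \<union> arc (c b) (cut_len 3 c b)"
    using D cyclic by auto
  moreover have "{c 0<..<c 1} \<inter> {c 1<..<c 2} = {}" "{c 0<..<c 1} \<inter> ({c 2<..<1} \<union> {0..<c 0}) = {}"
    "{c 1<..<c 2} \<inter> ({c 2<..<1} \<union> {0..<c 0}) = {}"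
    using c by auto
  then have "arc (c f) (cut_len 3 c f) \<inter> arc (c a) (cut_len 3 c a) = {}"
      "arc (c f) (cut_len 3 c f) \<inter> arc (c b) (cut_len 3 c b) = {}"
      "arc (c a) (cut_len 3 c a) \<inter> arc (c b) (cut_len 3 c b) = {}"
    using cyclic arcs by (auto simp: Int_commute)
  moreover have "0 < cut_len 3 c f" "0 < cut_len 3 c a" "0 < cut_len 3 c b"
      "cut_len 3 c f + cut_len 3 c a + cut_len 3 c b = 1"
      "c a - c f - cut_len 3 c f \<in> \<int>" "c b - c a - cut_len 3 c a \<in> \<int>"
    using cyclic c by (auto simp: cut_len_def numeral_2_eq_2)
  moreover have "c f \<in> circ" using cyclic c by (auto simp: circ_def)
  ultimately show ?thesis using inj by unfold_locales
qed

lemma cet_flips_3_1_normal_form: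
  assumes "cet_flips 3 1 D T"
  obtains cf ca cb l g h tf ta tb where "cet3_one_flip D T cf ca cb l g h tf ta tb"
proof -
  obtain c t fl where cd: "cet_data 3 c t fl D T" and one_flip: "card {i. i < 3 \<and> fl i} = 1"
    using assms unfolding cet_flips_def by blast
  obtain f where "{i. i < 3 \<and> fl i} = {f}" using one_flip by (rule card_1_singletonE)
  then have f: "f < 3" "fl f" and unique: "\<And>i. i < 3 \<Longrightarrow> fl i \<Longrightarrow> i = f" by blast+
  have "(f + 1) mod 3 \<noteq> f" "(f + 2) mod 3 \<noteq> f"
  proof -
    have "f = 0 \<or> f = 1 \<or> f = 2" using f(1) by auto
    then show "(f + 1) mod 3 \<noteq> f" "(f + 2) mod 3 \<noteq> f" by (elim disjE; simp)+
  qed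
  then have "\<not> fl ((f + 1) mod 3)" "\<not> fl ((f + 2) mod 3)" using unique f(1) by auto
  then show ?thesis by (rule that[OF cet_data_3_one_flip[OF cd f]])
qed

theorem theorem3p1:
  shows "(\<forall>D T. cet_flips 3 1 D T \<longrightarrow> (\<exists>p. periodic_point D T p))
       \<and> \<not> (\<exists>D T. cet_flips 3 1 D T \<and> transitive D T)"
proof -
  have "\<exists>p. periodic_point D T p" "\<not> transitive D T" if cet: "cet_flips 3 1 D T" for D T
  proof -
    obtain cf ca cb l g h tf ta tb where "cet3_one_flip D T cf ca cb l g h tf ta tb"
      using cet_flips_3_1_normal_form[OF cet] .
    then interpret cet3_one_flip D T cf ca cb l g h tf ta tb .
    show "\<exists>p. periodic_point D T p" by (rule periodic_point_exists)
    then show "\<not> transitive D T" using not_transitive_if_periodic_point by blast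
  qed
  then show ?thesis by blast
qed

end
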